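(* Let $p\ge3$, $d_j>0$, $\gamma_j\ge0$ ($j=1,\ldots,p$), with indices sorted so that $d_1^2/(d_1+\gamma_1)\ge\cdots\ge d_p^2/(d_p+\gamma_p)$, and for $3\le k\le p$ let \[ M_k=\frac{(k-2)^2}{\sum_{j=1}^k (d_j+\gamma_j)/d_j^2}+\sum_{j=k+1}^p\frac{d_j^2}{d_j+\gamma_j}. \] Then the sequence $(M_3,M_4,\ldots,M_p)$ is nonincreasing: for $3\le k\le p-1$, $M_k\ge M_{k+1}$, with equality if and only if \[ \frac{k-2}{\sum_{j=1}^k (d_j+\gamma_j)/d_j^2}=\frac{d_{k+1}^2}{d_{k+1}+\gamma_{k+1}}. \] Furthermore, let $A^\dagger=\operatorname{diag}(a_1^\dagger,\ldots,a_p^\dagger)$ be the unique maximizer of $\sum_j d_ja_j-2\max_j d_ja_j$ over $a_j\ge0$ with $\sum_j(d_j+\gamma_j)a_j^2=\sum_j d_j^2/(d_j+\gamma_j)$, and let $\nu$ be the largest index with $d_\nu a_\nu^\dagger=\max_j d_ja_j^\dagger$. If $\nu\le p-1$, then the condition $d_\nu a_\nu^\dagger>d_{\nu+1}a_{\nu+1}^\dagger$ is equivalent to \[ \frac{\nu-2}{\sum_{j=1}^\nu (d_j+\gamma_j)/d_j^2}>\frac{d_{\nu+1}^2}{d_{\nu+1}+\gamma_{\nu+1}}; \] consequently $\nu$ is the smallest index $k$ with $3\le k\le p-1$ such that $\frac{k-2}{\sum_{j=1}^k (d_j+\gamma_j)/d_j^2}>\frac{d_{k+1}^2}{d_{k+1}+\gamma_{k+1}}$,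 and $M_\nu>M_{\nu+1}$.
   Context: The maximizer $A^\dagger$ exists and is unique; $\nu\ge3$. *)

theory Defs
  imports Complex_Main
begin

text \<open>Indices run over 1..p; d, gamma, a are functions nat => real (values outside 1..p irrelevant).\<close>

definition rr :: "(nat \<Rightarrow> real) \<Rightarrow> (nat \<Rightarrow> real) \<Rightarrow> nat \<Rightarrow> real" where
  "rr d g j = (d j)^2 / (d j + g j)"

definition Mk :: "(nat \<Rightarrow> real) \<Rightarrow> (nat \<Rightarrow> real) \<Rightarrow> nat \<Rightarrow> nat \<Rightarrow> real" where
  "Mk d g p k = (real k - 2)^2 / (\<Sum>j=1..k. (d j + g j) / (d j)^2)
               + (\<Sum>j=k+1..p. (d j)^2 / (d j + g j))"

definition cond :: "(nat \<Rightarrow> real) \<Rightarrow> (nat \<Rightarrow> real) \<Rightarrow> nat \<Rightarrow> real" where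
  "cond d g k = (real k - 2) / (\<Sum>j=1..k. (d j + g j) / (d j)^2)"

definition feasible :: "(nat \<Rightarrow> real) \<Rightarrow> (nat \<Rightarrow> real) \<Rightarrow> nat \<Rightarrow> (nat \<Rightarrow> real) \<Rightarrow> bool" where
  "feasible d g p a \<longleftrightarrow> (\<forall>j\<in>{1..p}. a j \<ge> 0) \<and>
     (\<Sum>j=1..p. (d j + g j) * (a j)^2) = (\<Sum>j=1..p. (d j)^2 / (d j + g j))"

definition obj :: "(nat \<Rightarrow> real) \<Rightarrow> nat \<Rightarrow> (nat \<Rightarrow> real) \<Rightarrow> real" where
  "obj d p a = (\<Sum>j=1..p. d j * a j) - 2 * Max ((\<lambda>j. d j * a j) ` {1..p})"

definition is_maximizer :: "(nat \<Rightarrow> real) \<Rightarrow> (nat \<Rightarrow> real) \<Rightarrow> nat \<Rightarrow> (nat \<Rightarrow> real) \<Rightarrow> bool" where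
  "is_maximizer d g p a \<longleftrightarrow> feasible d g p a \<and> (\<forall>b. feasible d g p b \<longrightarrow> obj d p b \<le> obj d p a)"

end

theory Submission
  imports Defs
begin

(*
  Write w_j = (d_j + g_j) / d_j^2 = 1 / rr_j, S = w_1 + ... + w_k and x = w_(k+1).  Then
  M_k - M_(k+1) = ((k - 2) x - S)^2 / (S x (S + x)), which gives the monotonicity of M and its
  equality case.

  For the maximiser a, the objective is positively homogeneous of degree one, so a also maximises
  obj(x)^2 / (sum_j (d_j + g_j) x_j^2) over nonnegative x.  One-sided first-order conditions for
  this quotient along a few perturbations of a pin a down.  Let m be the peak value max_j d_j a_j,
  F the optimal value, R the constraint level and lambda = m F / R.  Raising a single off-peak
  coordinate shows rr_j < lambda off the peak; lowering a single peak coordinate shows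
  lambda <= rr_j on the peak; scaling the whole peak block up and down shows
  |peak| - 2 = lambda * sum_(peak) w_j.  For sorted rr the peak set is therefore {1..nu}, so
  cond nu = lambda > rr_(nu+1), while lambda w_j <= 1 on the peak gives cond k <= rr_(k+1)
  for k < nu.
*)

lemma obj_scale:
  assumes "0 \<le> c" "1 \<le> p"
  shows "obj d p (\<lambda>j. c * x j) = c * obj d p x"
proof -
  have "mono (\<lambda>y::real. c * y)" using assms(1) by (auto intro: monoI mult_left_mono)
  then have "c * Max ((\<lambda>j. d j * x j) ` {1..p}) = Max ((\<lambda>y. c * y) ` (\<lambda>j. d j * x j) ` {1..p})"
    using assms(2) by (intro mono_Max_commute) auto
  then have "Max ((\<lambda>j. d j * (c * x j)) ` {1..p}) = c * Max ((\<lambda>j. d j * x j) ` {1..p})"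
    by (simp add: image_image algebra_simps)
  then show ?thesis unfolding obj_def by (simp add: sum_distrib_left algebra_simps)
qed

lemma Max_image_eqI:
  assumes "finite A" "i \<in> A" "f i = x" "\<And>j. j \<in> A \<Longrightarrow> f j \<le> x"
  shows "Max (f ` A) = x"
  using assms by (intro Max_eqI) auto

lemma sum_mult_delta:
  fixes f :: "'a \<Rightarrow> 'b::semiring_0"
  assumes "finite A"
  shows "(\<Sum>k\<in>A. f k * (if k = j then c else 0)) = (if j \<in> A then f j * c else 0)"
  using assms by (simp add: if_distrib[of "(*) (f _)"] cong: if_cong)

locale diag_weights =
  fixes d g :: "nat \<Rightarrow> real" and p :: nat
  assumes d_pos: "\<And>j. j \<in> {1..p} \<Longrightarrow> 0 < d j"
    and g_nonneg: "\<And>j. j \<in> {1..p} \<Longrightarrow> 0 \<le> g j"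
begin

definition budget :: real where
  "budget = (\<Sum>j=1..p. (d j)^2 / (d j + g j))"

lemma weight_pos: "j \<in> {1..p} \<Longrightarrow> 0 < (d j + g j) / (d j)^2"
  using d_pos g_nonneg by (metis add_pos_nonneg divide_pos_pos zero_less_power)

lemma rr_pos: "j \<in> {1..p} \<Longrightarrow> 0 < rr d g j"
  unfolding rr_def using d_pos g_nonneg by (metis add_pos_nonneg divide_pos_pos zero_less_power)

lemma rr_mult_weight:
  assumes "j \<in> {1..p}"
  shows "rr d g j * ((d j + g j) / (d j)^2) = 1"
proof -
  have "d j \<noteq> 0" "d j + g j \<noteq> 0" using d_pos[OF assms] g_nonneg[OF assms] by auto
  then show ?thesis unfolding rr_def by simp
qed

lemma budget_pos: "1 \<le> p \<Longrightarrow> 0 < budget"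
  unfolding budget_def using rr_pos by (intro sum_pos) (auto simp: rr_def)

lemma Mk_diff:
  assumes "1 \<le> k" "k < p"
  defines "S \<equiv> \<Sum>j=1..k. (d j + g j) / (d j)^2"
    and "x \<equiv> (d (k+1) + g (k+1)) / (d (k+1))^2"
  shows "Mk d g p k - Mk d g p (k+1) = ((real k - 2) * x - S)^2 / (S * x * (S + x))"
proof -
  define T where "T = (\<Sum>j=Suc (k+1)..p. (d j)^2 / (d j + g j))"
  have S_pos: "0 < S" unfolding S_def using assms(1,2) by (intro sum_pos) (auto intro: weight_pos)
  have x_pos: "0 < x" unfolding x_def using assms(2) by (intro weight_pos) auto
  have "(\<Sum>j=k+1..p. (d j)^2 / (d j + g j)) = 1/x + T"
    unfolding T_def x_def using assms(2) by (subst sum.atLeast_Suc_atMost) auto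
  then have Mk_k: "Mk d g p k = (real k - 2)^2 / S + 1/x + T"
    unfolding Mk_def S_def by simp
  have Mk_Suc: "Mk d g p (k+1) = (real k - 1)^2 / (S + x) + T"
    unfolding Mk_def S_def x_def T_def by (simp add: algebra_simps)
  show ?thesis unfolding Mk_k Mk_Suc using S_pos x_pos by (simp add: field_simps power2_eq_square)
qed

lemma Mk_step:
  assumes "1 \<le> k" "k < p"
  shows "Mk d g p (k+1) \<le> Mk d g p k"
    and "Mk d g p k = Mk d g p (k+1) \<longleftrightarrow> cond d g k = rr d g (k+1)"
proof -
  define S where "S = (\<Sum>j=1..k. (d j + g j) / (d j)^2)"
  define x where "x = (d (k+1) + g (k+1)) / (d (k+1))^2"
  have S_pos: "0 < S" unfolding S_def using assms by (intro sum_pos) (auto intro: weight_pos)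
  have x_pos: "0 < x" unfolding x_def using assms by (intro weight_pos) auto
  have diff: "Mk d g p k - Mk d g p (k+1) = ((real k - 2) * x - S)^2 / (S * x * (S + x))"
    using Mk_diff[OF assms] unfolding S_def x_def .
  moreover have "0 \<le> ((real k - 2) * x - S)^2 / (S * x * (S + x))" using S_pos x_pos by simp
  ultimately show "Mk d g p (k+1) \<le> Mk d g p k" by simp
  have "cond d g k = rr d g (k+1) \<longleftrightarrow> (real k - 2) / S = 1 / x"
    unfolding cond_def rr_def S_def x_def by simp
  also have "\<dots> \<longleftrightarrow> ((real k - 2) * x - S)^2 = 0"
    using S_pos x_pos by (auto simp: field_simps)
  also have "\<dots> \<longleftrightarrow> Mk d g p k = Mk d g p (k+1)"
    using diff S_pos x_pos by auto
  finally show "Mk d g p k = Mk d g p (k+1) \<longleftrightarrow> cond d g k = rr d g (k+1)" ..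
qed

lemma maximizer_scaled_bound:
  assumes "1 \<le> p" and max: "is_maximizer d g p a"
    and x_nonneg: "\<forall>j\<in>{1..p}. 0 \<le> x j"
    and q_pos: "0 < (\<Sum>j=1..p. (d j + g j) * (x j)^2)"
  shows "sqrt (budget / (\<Sum>j=1..p. (d j + g j) * (x j)^2)) * obj d p x \<le> obj d p a"
proof -
  define q where "q = (\<Sum>j=1..p. (d j + g j) * (x j)^2)"
  define c where "c = sqrt (budget / q)"
  have "0 \<le> budget / q" using budget_pos \<open>1 \<le> p\<close> q_pos q_def by simp
  then have c_nonneg: "0 \<le> c" and c_sq: "c^2 = budget / q" unfolding c_def by simp_all
  have "(\<Sum>j=1..p. (d j + g j) * (c * x j)^2) = c^2 * q"
    unfolding q_def by (simp add: sum_distrib_left power_mult_distrib algebra_simps)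
  also have "\<dots> = budget" using c_sq q_pos q_def by simp
  finally have "feasible d g p (\<lambda>j. c * x j)"
    unfolding feasible_def budget_def using c_nonneg x_nonneg by simp
  then have "obj d p (\<lambda>j. c * x j) \<le> obj d p a" using max unfolding is_maximizer_def by blast
  then show ?thesis using obj_scale[OF c_nonneg \<open>1 \<le> p\<close>] unfolding c_def q_def by simp
qed

lemma maximizer_homogeneous_bound:
  assumes "1 \<le> p" and max: "is_maximizer d g p a"
    and x_nonneg: "\<forall>j\<in>{1..p}. 0 \<le> x j" and obj_x: "0 \<le> obj d p x"
  shows "(obj d p x)^2 * budget \<le> (obj d p a)^2 * (\<Sum>j=1..p. (d j + g j) * (x j)^2)"
proof -
  define q where "q = (\<Sum>j=1..p. (d j + g j) * (x j)^2)"
  have budget_nonneg: "0 \<le> budget" using budget_pos \<open>1 \<le> p\<close> by simp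
  have terms_nonneg: "\<And>j. j \<in> {1..p} \<Longrightarrow> 0 \<le> (d j + g j) * (x j)^2"
    using d_pos g_nonneg by (simp add: add_nonneg_nonneg less_imp_le)
  show ?thesis
  proof (cases "q = 0")
    case True
    then have "\<forall>j\<in>{1..p}. (d j + g j) * (x j)^2 = 0"
      unfolding q_def using sum_nonneg_eq_0_iff[of "{1..p}", OF _ terms_nonneg] by simp
    moreover have "\<And>j. j \<in> {1..p} \<Longrightarrow> 0 < d j + g j"
      using d_pos g_nonneg by (simp add: add_pos_nonneg)
    ultimately have "\<forall>j\<in>{1..p}. x j = 0" by fastforce
    then have "(\<lambda>j. d j * x j) ` {1..p} = {0}" and "(\<Sum>j=1..p. d j * x j) = 0"
      using \<open>1 \<le> p\<close> by auto
    then have "obj d p x = 0" unfolding obj_def by simp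
    then show ?thesis using True q_def by simp
  next
    case False
    have "0 \<le> q" unfolding q_def by (intro sum_nonneg terms_nonneg)
    with False have q_pos: "0 < q" by simp
    have "sqrt (budget / q) * obj d p x \<le> obj d p a"
      using maximizer_scaled_bound[OF assms(1-3)] q_pos unfolding q_def by simp
    then have "(sqrt (budget / q) * obj d p x)^2 \<le> (obj d p a)^2"
      using obj_x budget_nonneg q_pos by (intro power_mono) auto
    then have "budget / q * (obj d p x)^2 \<le> (obj d p a)^2"
      using budget_nonneg q_pos by (simp add: power_mult_distrib)
    then show ?thesis using q_pos unfolding q_def[symmetric]
      by (simp add: field_simps mult.commute)
  qed
qed

end

lemma nonpos_if_le_small_multiples:
  fixes e C \<delta> :: real
  assumes "0 < \<delta>" and le: "\<And>t. 0 < t \<Longrightarrow> t < \<delta> \<Longrightarrow> e \<le> t * C"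
  shows "e \<le> 0"
proof (rule ccontr)
  assume "\<not> e \<le> 0"
  define t where "t = min (\<delta> / 2) (e / (\<bar>C\<bar> + 1))"
  have "0 < t" "t < \<delta>" unfolding t_def using \<open>0 < \<delta>\<close> \<open>\<not> e \<le> 0\<close> by auto
  have "t * C \<le> t * \<bar>C\<bar>" using \<open>0 < t\<close> by (simp add: mult_left_mono)
  also have "\<dots> < t * (\<bar>C\<bar> + 1)" using \<open>0 < t\<close> by simp
  also have "\<dots> \<le> e" unfolding t_def
    by (metis abs_ge_zero add_nonneg_pos min.cobounded2 pos_le_divide_eq zero_less_one)
  finally show False using le[OF \<open>0 < t\<close> \<open>t < \<delta>\<close>] by simp
qed

locale diag_maximizer = diag_weights +
  fixes a :: "nat \<Rightarrow> real"
  assumes maximizer: "is_maximizer d g p a"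
    and three_le_p: "3 \<le> p"
begin

definition peak :: real where
  "peak = Max ((\<lambda>j. d j * a j) ` {1..p})"

definition peak_set :: "nat set" where
  "peak_set = {j \<in> {1..p}. d j * a j = peak}"

definition level :: real where
  "level = peak * obj d p a / budget"

lemma a_nonneg: "j \<in> {1..p} \<Longrightarrow> 0 \<le> a j"
  using maximizer unfolding is_maximizer_def feasible_def by blast

lemma quad_form_a: "(\<Sum>j=1..p. (d j + g j) * (a j)^2) = budget"
  using maximizer unfolding is_maximizer_def feasible_def budget_def by blast

lemma le_peak: "j \<in> {1..p} \<Longrightarrow> d j * a j \<le> peak"
  unfolding peak_def by simp

lemma peak_set_nonempty: "peak_set \<noteq> {}"
proof -
  have "peak \<in> (\<lambda>j. d j * a j) ` {1..p}" unfolding peak_def using three_le_p by (intro Max_in) auto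
  then show ?thesis unfolding peak_set_def by auto
qed

lemma finite_peak_set: "finite peak_set"
  unfolding peak_set_def by simp

lemma obj_a_eq: "obj d p a = (\<Sum>j=1..p. d j * a j) - 2 * peak"
  unfolding obj_def peak_def ..

lemma obj_pos: "0 < obj d p a"
proof -
  define x where "x j = 1 / d j" for j
  have dx: "d j * x j = 1" if "j \<in> {1..p}" for j using d_pos[OF that] unfolding x_def by simp
  have "(\<lambda>j. d j * x j) ` {1..p} = {1}" using dx three_le_p by force
  moreover have "(\<Sum>j=1..p. d j * x j) = real p" using dx by simp
  ultimately have obj_x: "obj d p x = real p - 2" unfolding obj_def by simp
  define q where "q = (\<Sum>j=1..p. (d j + g j) * (x j)^2)"
  have q_pos: "0 < q"
    unfolding q_def x_def using weight_pos three_le_p by (intro sum_pos) (auto simp: power_one_over)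
  have "\<forall>j\<in>{1..p}. 0 \<le> x j" unfolding x_def using d_pos by (simp add: less_imp_le)
  then have "sqrt (budget / q) * (real p - 2) \<le> obj d p a"
    using maximizer_scaled_bound[OF _ maximizer, where x=x] q_pos three_le_p
    unfolding q_def obj_x by simp
  moreover have "0 < sqrt (budget / q) * (real p - 2)"
    using budget_pos q_pos three_le_p by simp
  ultimately show ?thesis by linarith
qed

lemma peak_pos: "0 < peak"
proof -
  have "(\<Sum>j=1..p. d j * a j) \<le> (\<Sum>j=1..p. peak)" by (intro sum_mono le_peak)
  then have "obj d p a \<le> (real p - 2) * peak" unfolding obj_a_eq by (simp add: algebra_simps)
  then have "0 < (real p - 2) * peak" using obj_pos by linarith
  then show ?thesis using three_le_p by (simp add: zero_less_mult_iff)
qed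

(* The one-sided derivative at t = 0 of obj(a + t v)^2 / (sum_j (d_j + g_j) (a_j + t v_j)^2),
   which is maximal at t = 0, is nonpositive. *)
lemma first_order_condition:
  assumes "0 < \<delta>"
    and path: "\<And>t. 0 < t \<Longrightarrow> t < \<delta> \<Longrightarrow> (\<forall>j\<in>{1..p}. 0 \<le> a j + t * v j)
                 \<and> Max ((\<lambda>j. d j * (a j + t * v j)) ` {1..p}) = peak + t * \<mu>"
  shows "((\<Sum>j=1..p. d j * v j) - 2 * \<mu>) * budget
           \<le> obj d p a * (\<Sum>j=1..p. (d j + g j) * a j * v j)"
proof -
  define F where "F = obj d p a"
  define L where "L = (\<Sum>j=1..p. d j * v j) - 2 * \<mu>"
  define B where "B = (\<Sum>j=1..p. (d j + g j) * a j * v j)"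
  define K where "K = (\<Sum>j=1..p. (d j + g j) * (v j)^2)"
  have obj_path: "obj d p (\<lambda>j. a j + t * v j) = F + t * L" if "0 < t" "t < \<delta>" for t
  proof -
    have "obj d p (\<lambda>j. a j + t * v j) = (\<Sum>j=1..p. d j * (a j + t * v j)) - 2 * (peak + t * \<mu>)"
      using path[OF that] unfolding obj_def by simp
    also have "\<dots> = F + t * L" unfolding F_def obj_a_eq L_def
      by (simp add: sum.distrib sum_distrib_left algebra_simps)
    finally show ?thesis .
  qed
  have quad_path: "(\<Sum>j=1..p. (d j + g j) * (a j + t * v j)^2) = budget + 2 * t * B + t^2 * K" for t
  proof -
    have "(\<Sum>j=1..p. (d j + g j) * (a j + t * v j)^2)
        = (\<Sum>j=1..p. (d j + g j) * (a j)^2 + 2 * t * ((d j + g j) * a j * v j)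
                      + t^2 * ((d j + g j) * (v j)^2))"
      by (rule sum.cong) (simp_all add: power2_eq_square algebra_simps)
    then show ?thesis unfolding B_def K_def quad_form_a[symmetric]
      by (simp add: sum.distrib sum_distrib_left)
  qed
  define \<delta>' where "\<delta>' = min \<delta> (F / (\<bar>L\<bar> + 1))"
  have "0 < \<delta>'" unfolding \<delta>'_def F_def using \<open>0 < \<delta>\<close> obj_pos by simp
  have small: "2 * F * (L * budget - F * B) \<le> t * (F^2 * K - L^2 * budget)"
    if "0 < t" "t < \<delta>'" for t
  proof -
    have "t < \<delta>" "t * (\<bar>L\<bar> + 1) < F"
      using that unfolding \<delta>'_def by (auto simp: less_divide_eq)
    moreover have "- (t * L) \<le> t * \<bar>L\<bar>"
      using \<open>0 < t\<close> abs_ge_minus_self[of "t * L"] by (simp add: abs_mult)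
    ultimately have "0 \<le> obj d p (\<lambda>j. a j + t * v j)"
      unfolding obj_path[OF \<open>0 < t\<close> \<open>t < \<delta>\<close>] using \<open>0 < t\<close>
      by (simp add: algebra_simps)
    then have "(obj d p (\<lambda>j. a j + t * v j))^2 * budget
               \<le> (obj d p a)^2 * (\<Sum>j=1..p. (d j + g j) * (a j + t * v j)^2)"
      using three_le_p path[OF \<open>0 < t\<close> \<open>t < \<delta>\<close>]
      by (intro maximizer_homogeneous_bound[OF _ maximizer]) auto
    then have "(F + t * L)^2 * budget \<le> F^2 * (budget + 2 * t * B + t^2 * K)"
      unfolding obj_path[OF \<open>0 < t\<close> \<open>t < \<delta>\<close>] quad_path F_def .
    then have "t * (2 * F * (L * budget - F * B)) \<le> t * (t * (F^2 * K - L^2 * budget))"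
      by (simp add: power2_eq_square algebra_simps)
    then show ?thesis using \<open>0 < t\<close> by simp
  qed
  have "2 * F * (L * budget - F * B) \<le> 0"
    by (rule nonpos_if_le_small_multiples[OF \<open>0 < \<delta>'\<close> small])
  then show ?thesis using obj_pos unfolding F_def L_def B_def by (simp add: mult_le_0_iff)
qed

lemma peak_gap:
  obtains \<epsilon> where "0 < \<epsilon>"
    and "\<And>j. j \<in> {1..p} \<Longrightarrow> j \<notin> peak_set \<Longrightarrow> d j * a j \<le> (1 - \<epsilon>) * peak"
proof -
  define V where "V = insert 0 ((\<lambda>j. d j * a j) ` ({1..p} - peak_set))"
  have "finite V" unfolding V_def by simp
  have "\<forall>y\<in>V. y < peak"
    using peak_pos le_peak unfolding V_def peak_set_def by (auto simp: less_le)
  then have "Max V < peak" using Max_in[OF \<open>finite V\<close>] unfolding V_def by blast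
  show ?thesis
  proof
    show "0 < (peak - Max V) / peak" using \<open>Max V < peak\<close> peak_pos by simp
    fix j assume "j \<in> {1..p}" "j \<notin> peak_set"
    then have "d j * a j \<le> Max V" using \<open>finite V\<close> unfolding V_def by (intro Max_ge) auto
    then show "d j * a j \<le> (1 - (peak - Max V) / peak) * peak" using peak_pos by (simp add: field_simps)
  qed
qed

lemma rr_lt_level:
  assumes j: "j \<in> {1..p}" "j \<notin> peak_set"
  shows "rr d g j < level"
proof -
  have below: "d j * a j < peak" using le_peak[OF j(1)] j unfolding peak_set_def by (auto simp: less_le)
  obtain i where "i \<in> peak_set" using peak_set_nonempty by blast
  then have i: "i \<in> {1..p}" "d i * a i = peak" "i \<noteq> j" using j(2) unfolding peak_set_def by auto
  define v where "v k = (if k = j then 1 else 0 :: real)" for k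
  have "((\<Sum>k=1..p. d k * v k) - 2 * 0) * budget \<le> obj d p a * (\<Sum>k=1..p. (d k + g k) * a k * v k)"
  proof (rule first_order_condition)
    show "0 < (peak - d j * a j) / d j" using below d_pos[OF j(1)] by simp
    fix t assume t: "0 < t" "t < (peak - d j * a j) / d j"
    then have "d j * (a j + t) < peak" using d_pos[OF j(1)] by (simp add: less_divide_eq algebra_simps)
    then have "Max ((\<lambda>k. d k * (a k + t * v k)) ` {1..p}) = peak"
      using i le_peak by (intro Max_image_eqI[OF _ i(1)]) (auto simp: v_def)
    then show "(\<forall>k\<in>{1..p}. 0 \<le> a k + t * v k)
        \<and> Max ((\<lambda>k. d k * (a k + t * v k)) ` {1..p}) = peak + t * 0"
      using a_nonneg t(1) by (simp add: v_def)
  qed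
  then have "d j * budget \<le> obj d p a * ((d j + g j) * a j)" using j(1) by (simp add: v_def sum_mult_delta)
  then have "d j / (d j + g j) * (d j * budget) \<le> d j / (d j + g j) * (obj d p a * ((d j + g j) * a j))"
    using d_pos[OF j(1)] g_nonneg[OF j(1)] by (intro mult_left_mono) auto
  then have "rr d g j * budget \<le> obj d p a * (d j * a j)"
    unfolding rr_def using d_pos[OF j(1)] g_nonneg[OF j(1)] by (simp add: power2_eq_square mult_ac)
  also have "\<dots> < obj d p a * peak" using below obj_pos by simp
  finally show ?thesis unfolding level_def using budget_pos three_le_p by (simp add: less_divide_eq algebra_simps)
qed

lemma a_on_peak_set:
  assumes "j \<in> peak_set"
  shows "a j = peak / d j"
proof -
  have "j \<in> {1..p}" "d j * a j = peak" using assms unfolding peak_set_def by auto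
  then show ?thesis using d_pos[of j] by (auto simp: field_simps)
qed

(* A second peak index keeps the maximum at peak when the coordinate j is lowered. *)
lemma level_le_rr:
  assumes j: "j \<in> peak_set" and card: "2 \<le> card peak_set"
  shows "level \<le> rr d g j"
proof -
  have "\<not> peak_set \<subseteq> {j}"
    using card card_mono[of "{j}" peak_set] by auto
  then obtain i where "i \<in> peak_set" "i \<noteq> j" by blast
  then have i: "i \<in> {1..p}" "d i * a i = peak" unfolding peak_set_def by auto
  have j': "j \<in> {1..p}" "d j * a j = peak" using j unfolding peak_set_def by auto
  define v where "v k = (if k = j then - a j else 0)" for k
  have "((\<Sum>k=1..p. d k * v k) - 2 * 0) * budget \<le> obj d p a * (\<Sum>k=1..p. (d k + g k) * a k * v k)"
  proof (rule first_order_condition)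
    show "(0::real) < 1" by simp
    fix t :: real assume t: "0 < t" "t < 1"
    have "d j * (a j + t * v j) \<le> peak"
      using j' t peak_pos by (simp add: v_def algebra_simps mult_le_cancel_right1)
    then have "Max ((\<lambda>k. d k * (a k + t * v k)) ` {1..p}) = peak"
      using i \<open>i \<noteq> j\<close> le_peak by (intro Max_image_eqI[OF _ i(1)]) (auto simp: v_def)
    moreover have "0 \<le> a k + t * v k" if "k \<in> {1..p}" for k
      using a_nonneg[OF that] t by (cases "k = j") (auto simp: v_def mult_left_le_one_le)
    ultimately show "(\<forall>k\<in>{1..p}. 0 \<le> a k + t * v k)
        \<and> Max ((\<lambda>k. d k * (a k + t * v k)) ` {1..p}) = peak + t * 0"
      by simp
  qed
  then have "obj d p a * ((d j + g j) * (a j)^2) \<le> peak * budget"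
    using j' by (simp add: v_def sum_mult_delta power2_eq_square)
  moreover have "(d j + g j) * (a j)^2 = peak * (peak * ((d j + g j) / (d j)^2))"
    by (simp add: a_on_peak_set[OF j] power_divide power2_eq_square)
  ultimately have "peak * (obj d p a * peak * ((d j + g j) / (d j)^2)) \<le> peak * budget"
    by (simp add: mult_ac)
  then have "obj d p a * peak * ((d j + g j) / (d j)^2) \<le> budget"
    using peak_pos by (rule mult_left_le_imp_le)
  then show ?thesis
    unfolding level_def rr_def using budget_pos three_le_p d_pos[OF j'(1)] g_nonneg[OF j'(1)]
    by (simp add: field_simps)
qed

lemma scaled_peak_path:
  assumes "\<bar>s\<bar> \<le> 1"
  obtains \<delta> where "0 < \<delta>"
    and "\<And>t. 0 < t \<Longrightarrow> t < \<delta> \<Longrightarrow>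
           (\<forall>k\<in>{1..p}. 0 \<le> a k + t * (if k \<in> peak_set then s * a k else 0))
         \<and> Max ((\<lambda>k. d k * (a k + t * (if k \<in> peak_set then s * a k else 0))) ` {1..p})
             = peak + t * (s * peak)"
proof -
  obtain \<epsilon> where "0 < \<epsilon>"
    and gap: "\<And>j. j \<in> {1..p} \<Longrightarrow> j \<notin> peak_set \<Longrightarrow> d j * a j \<le> (1 - \<epsilon>) * peak"
    using peak_gap by blast
  obtain i where "i \<in> peak_set" using peak_set_nonempty by blast
  then have i: "i \<in> {1..p}" "d i * a i = peak" unfolding peak_set_def by auto
  define v where "v k = (if k \<in> peak_set then s * a k else 0)" for k
  have "0 < min 1 \<epsilon>" using \<open>0 < \<epsilon>\<close> by simp
  moreover have "(\<forall>k\<in>{1..p}. 0 \<le> a k + t * v k)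
      \<and> Max ((\<lambda>k. d k * (a k + t * v k)) ` {1..p}) = peak + t * (s * peak)"
    if t: "0 < t" "t < min 1 \<epsilon>" for t
  proof -
    have "- 1 * t \<le> s * t" using assms t(1) by (intro mult_right_mono) auto
    then have st: "- t \<le> s * t" by simp
    have "d k * (a k + t * v k) \<le> peak + t * (s * peak)" if "k \<in> {1..p}" for k
    proof (cases "k \<in> peak_set")
      case True
      then show ?thesis unfolding v_def peak_set_def by (simp add: algebra_simps)
    next
      case False
      have "(1 - \<epsilon>) * peak \<le> (1 + s * t) * peak" using st t peak_pos by (intro mult_right_mono) auto
      then show ?thesis using gap[OF that False] False unfolding v_def by (simp add: algebra_simps)
    qed
    then have "Max ((\<lambda>k. d k * (a k + t * v k)) ` {1..p}) = peak + t * (s * peak)"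
      using i \<open>i \<in> peak_set\<close> by (intro Max_image_eqI[OF _ i(1)]) (auto simp: v_def algebra_simps)
    moreover have "0 \<le> a k + t * v k" if "k \<in> {1..p}" for k
    proof -
      have "0 \<le> (1 + s * t) * a k" using st t a_nonneg[OF that] by simp
      then show ?thesis using a_nonneg[OF that] unfolding v_def by (simp add: algebra_simps)
    qed
    ultimately show ?thesis by simp
  qed
  ultimately show ?thesis using that unfolding v_def by blast
qed

lemma peak_scaling:
  assumes "\<bar>s\<bar> \<le> 1"
  shows "s * ((real (card peak_set) - 2) * budget)
           \<le> s * (obj d p a * peak * (\<Sum>j\<in>peak_set. (d j + g j) / (d j)^2))"
proof -
  define v where "v k = (if k \<in> peak_set then s * a k else 0)" for k
  obtain \<delta> where "0 < \<delta>"
    and path: "\<And>t. 0 < t \<Longrightarrow> t < \<delta> \<Longrightarrow> (\<forall>k\<in>{1..p}. 0 \<le> a k + t * v k)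
      \<and> Max ((\<lambda>k. d k * (a k + t * v k)) ` {1..p}) = peak + t * (s * peak)"
    using scaled_peak_path[OF assms] unfolding v_def by blast
  have restrict: "(\<Sum>k=1..p. if k \<in> peak_set then f k else 0) = (\<Sum>k\<in>peak_set. f k)"
    for f :: "nat \<Rightarrow> real"
  proof -
    have "peak_set \<subseteq> {1..p}" unfolding peak_set_def by auto
    then show ?thesis using sum.inter_restrict[of "{1..p}" f peak_set] by (simp add: Int_absorb1)
  qed
  have "((\<Sum>k=1..p. d k * v k) - 2 * (s * peak)) * budget
      \<le> obj d p a * (\<Sum>k=1..p. (d k + g k) * a k * v k)"
    using \<open>0 < \<delta>\<close> path by (rule first_order_condition)
  moreover have "(\<Sum>k=1..p. d k * v k) = s * (real (card peak_set) * peak)"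
  proof -
    have "(\<Sum>k=1..p. d k * v k) = (\<Sum>k\<in>peak_set. s * peak)"
      unfolding v_def restrict[symmetric] by (rule sum.cong) (auto simp: peak_set_def)
    then show ?thesis by simp
  qed
  moreover have "(\<Sum>k=1..p. (d k + g k) * a k * v k)
      = s * peak^2 * (\<Sum>j\<in>peak_set. (d j + g j) / (d j)^2)"
  proof -
    have "(\<Sum>k=1..p. (d k + g k) * a k * v k)
        = (\<Sum>k\<in>peak_set. s * peak^2 * ((d k + g k) / (d k)^2))"
      unfolding v_def restrict[symmetric]
      by (rule sum.cong) (auto simp: a_on_peak_set power2_eq_square)
    then show ?thesis by (simp add: sum_distrib_left)
  qed
  ultimately have "peak * (s * ((real (card peak_set) - 2) * budget))
      \<le> peak * (s * (obj d p a * peak * (\<Sum>j\<in>peak_set. (d j + g j) / (d j)^2)))"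
    by (simp add: power2_eq_square algebra_simps)
  then show ?thesis using peak_pos by simp
qed

lemma peak_weight_pos: "0 < (\<Sum>j\<in>peak_set. (d j + g j) / (d j)^2)"
  using finite_peak_set peak_set_nonempty weight_pos unfolding peak_set_def
  by (intro sum_pos) auto

lemma card_peak_set: "real (card peak_set) - 2 = level * (\<Sum>j\<in>peak_set. (d j + g j) / (d j)^2)"
proof -
  have "(real (card peak_set) - 2) * budget = obj d p a * peak * (\<Sum>j\<in>peak_set. (d j + g j) / (d j)^2)"
    using peak_scaling[of 1] peak_scaling[of "-1"] by simp
  then show ?thesis unfolding level_def using budget_pos three_le_p by (simp add: field_simps)
qed

lemma two_lt_card_peak_set: "2 < card peak_set"
proof -
  have "0 < level" unfolding level_def using peak_pos obj_pos budget_pos three_le_p by simp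
  then have "0 < real (card peak_set) - 2" using card_peak_set peak_weight_pos by simp
  then show ?thesis by simp
qed

end

locale sorted_diag_maximizer = diag_maximizer +
  assumes rr_antimono: "\<And>i j. 1 \<le> i \<Longrightarrow> i \<le> j \<Longrightarrow> j \<le> p \<Longrightarrow> rr d g j \<le> rr d g i"
begin

lemma Max_peak_set_mem: "Max peak_set \<in> peak_set"
  using finite_peak_set peak_set_nonempty by (rule Max_in)

lemma peak_set_eq_atLeastAtMost: "peak_set = {1..Max peak_set}"
proof
  show "peak_set \<subseteq> {1..Max peak_set}"
    using finite_peak_set unfolding peak_set_def by auto
  show "{1..Max peak_set} \<subseteq> peak_set"
  proof
    fix j assume j: "j \<in> {1..Max peak_set}"
    have "Max peak_set \<le> p" using Max_peak_set_mem unfolding peak_set_def by auto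
    show "j \<in> peak_set"
    proof (rule ccontr)
      assume "j \<notin> peak_set"
      then have "rr d g j < level" using j \<open>Max peak_set \<le> p\<close> by (intro rr_lt_level) auto
      also have "\<dots> \<le> rr d g (Max peak_set)"
        using Max_peak_set_mem two_lt_card_peak_set by (intro level_le_rr) auto
      also have "\<dots> \<le> rr d g j" using j \<open>Max peak_set \<le> p\<close> by (intro rr_antimono) auto
      finally show False by simp
    qed
  qed
qed

lemma card_peak_set_eq_Max: "card peak_set = Max peak_set"
  by (metis card_atLeastAtMost diff_Suc_1 peak_set_eq_atLeastAtMost)

lemma cond_Max_peak_set: "cond d g (Max peak_set) = level"
  using card_peak_set peak_weight_pos
  unfolding cond_def card_peak_set_eq_Max peak_set_eq_atLeastAtMost[symmetric] by simp

lemma gap_after_Max_peak_set: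
  assumes "Max peak_set < p"
  shows "d (Max peak_set + 1) * a (Max peak_set + 1) < d (Max peak_set) * a (Max peak_set)"
    and "rr d g (Max peak_set + 1) < cond d g (Max peak_set)"
proof -
  have next_index: "Max peak_set + 1 \<in> {1..p}" "Max peak_set + 1 \<notin> peak_set"
    using assms Max_ge[OF finite_peak_set, of "Max peak_set + 1"] by auto
  then show "d (Max peak_set + 1) * a (Max peak_set + 1) < d (Max peak_set) * a (Max peak_set)"
    using Max_peak_set_mem le_peak[of "Max peak_set + 1"] unfolding peak_set_def by (auto simp: less_le)
  show "rr d g (Max peak_set + 1) < cond d g (Max peak_set)"
    using rr_lt_level[OF next_index] cond_Max_peak_set by simp
qed

lemma cond_le_rr_below_peak:
  assumes k: "1 \<le> k" "k < Max peak_set"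
  shows "cond d g k \<le> rr d g (k+1)"
proof -
  define \<nu> where "\<nu> = Max peak_set"
  define w where "w j = (d j + g j) / (d j)^2" for j
  have "\<nu> \<le> p" using Max_peak_set_mem unfolding \<nu>_def peak_set_def by auto
  have on_peak: "level \<le> rr d g j" "j \<in> {1..p}" if "j \<in> {1..\<nu>}" for j
  proof -
    have "j \<in> peak_set" using that peak_set_eq_atLeastAtMost unfolding \<nu>_def by blast
    then show "level \<le> rr d g j" "j \<in> {1..p}"
      using level_le_rr two_lt_card_peak_set unfolding peak_set_def by auto
  qed
  have "(\<Sum>j=k+1..\<nu>. level * w j) \<le> (\<Sum>j=k+1..\<nu>. 1)"
  proof (rule sum_mono)
    fix j assume "j \<in> {k+1..\<nu>}"
    then have "j \<in> {1..\<nu>}" using k by auto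
    then have "level * w j \<le> rr d g j * w j"
      using on_peak weight_pos unfolding w_def by (intro mult_right_mono) (auto simp: less_imp_le)
    then show "level * w j \<le> 1"
      using rr_mult_weight[OF on_peak(2)[OF \<open>j \<in> {1..\<nu>}\<close>]] unfolding w_def by linarith
  qed
  then have tail: "level * (\<Sum>j=k+1..\<nu>. w j) \<le> real \<nu> - real k"
    using k unfolding \<nu>_def by (simp add: sum_distrib_left of_nat_diff)
  have "(\<Sum>j=1..\<nu>. w j) = (\<Sum>j=1..k. w j) + (\<Sum>j=k+1..\<nu>. w j)"
    using sum.ub_add_nat[of 1 k w "\<nu> - k"] k unfolding \<nu>_def by simp
  moreover have "real \<nu> - 2 = level * (\<Sum>j=1..\<nu>. w j)"
    using card_peak_set unfolding w_def \<nu>_def card_peak_set_eq_Max peak_set_eq_atLeastAtMost[symmetric] .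
  ultimately have "real k - 2 \<le> level * (\<Sum>j=1..k. w j)" using tail by (simp add: algebra_simps)
  also have "\<dots> \<le> rr d g (k+1) * (\<Sum>j=1..k. w j)"
    using on_peak(1)[of "k+1"] k weight_pos \<open>\<nu> \<le> p\<close> unfolding w_def \<nu>_def
    by (intro mult_right_mono sum_nonneg) (auto simp: less_imp_le)
  finally have "real k - 2 \<le> rr d g (k+1) * (\<Sum>j=1..k. w j)" .
  moreover have "0 < (\<Sum>j=1..k. w j)"
    using k weight_pos \<open>\<nu> \<le> p\<close> unfolding w_def \<nu>_def by (intro sum_pos) auto
  ultimately show ?thesis unfolding cond_def w_def by (simp add: divide_le_eq)
qed

end

theorem corollary2:
  fixes d g :: "nat \<Rightarrow> real" and p :: nat
  assumes hp: "p \<ge> 3"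
    and hd: "\<forall>j\<in>{1..p}. d j > 0"
    and hg: "\<forall>j\<in>{1..p}. g j \<ge> 0"
    and hsort: "\<forall>i j. 1 \<le> i \<longrightarrow> i \<le> j \<longrightarrow> j \<le> p \<longrightarrow> rr d g j \<le> rr d g i"
  shows "(\<forall>k. 3 \<le> k \<and> k \<le> p - 1 \<longrightarrow>
            Mk d g p k \<ge> Mk d g p (k+1) \<and>
            (Mk d g p k = Mk d g p (k+1) \<longleftrightarrow> cond d g k = rr d g (k+1)))
       \<and> (\<forall>a \<nu>. is_maximizer d g p a
             \<and> (\<forall>b. is_maximizer d g p b \<longrightarrow> (\<forall>j\<in>{1..p}. b j = a j))
             \<and> \<nu> = Max {j\<in>{1..p}. d j * a j = Max ((\<lambda>i. d i * a i) ` {1..p})}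
             \<and> 3 \<le> \<nu> \<and> \<nu> \<le> p - 1
           \<longrightarrow> (d \<nu> * a \<nu> > d (\<nu>+1) * a (\<nu>+1) \<longleftrightarrow> cond d g \<nu> > rr d g (\<nu>+1))
             \<and> cond d g \<nu> > rr d g (\<nu>+1)
             \<and> (\<forall>k. 3 \<le> k \<and> k < \<nu> \<longrightarrow> \<not> (cond d g k > rr d g (k+1)))
             \<and> Mk d g p \<nu> > Mk d g p (\<nu>+1))"
proof -
  interpret diag_weights d g p using hd hg by unfold_locales auto
  have step: "Mk d g p (k+1) \<le> Mk d g p k"
    "Mk d g p k = Mk d g p (k+1) \<longleftrightarrow> cond d g k = rr d g (k+1)" if "3 \<le> k" "k \<le> p - 1" for k
    using Mk_step[of k] that hp by auto
  have main: "d (\<nu>+1) * a (\<nu>+1) < d \<nu> * a \<nu> \<and> rr d g (\<nu>+1) < cond d g \<nu>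
          \<and> (\<forall>k. 3 \<le> k \<and> k < \<nu> \<longrightarrow> \<not> rr d g (k+1) < cond d g k)
          \<and> Mk d g p (\<nu>+1) < Mk d g p \<nu>"
    if "is_maximizer d g p a" and \<nu>: "\<nu> = Max {j\<in>{1..p}. d j * a j = Max ((\<lambda>i. d i * a i) ` {1..p})}"
      and "3 \<le> \<nu>" "\<nu> \<le> p - 1" for a \<nu>
  proof -
    interpret sorted_diag_maximizer d g p a using that(1) hp hsort by unfold_locales auto
    have \<nu>_eq: "\<nu> = Max peak_set" unfolding \<nu> peak_set_def peak_def ..
    then have "rr d g (\<nu>+1) < cond d g \<nu>" "d (\<nu>+1) * a (\<nu>+1) < d \<nu> * a \<nu>"
      using gap_after_Max_peak_set \<open>\<nu> \<le> p - 1\<close> hp by auto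
    then show ?thesis
      using step[OF \<open>3 \<le> \<nu>\<close> \<open>\<nu> \<le> p - 1\<close>] cond_le_rr_below_peak \<nu>_eq by (auto simp: not_less)
  qed
  show ?thesis using step main by blast
qed

end
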